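(* If $A$ is a uniform Kan complex, then the canonical map $p:A^{\mathrm{I}}\to A\times A$ admits the structure of a uniform Kan fibration.
   Context: Let $\mathbb{B}$ be the category of finite sets $[n]=\{\bot,x_1,\dots,x_n,\top\}$ ($n\ge0$, $\bot\ne\top$) and functions preserving $\bot,\top$; cartesian cubical sets are presheaves on $\mathbb{B}^{op}$. $\mathrm{I}^n$ is the representable on $[n]$, $\mathrm{I}^n\cong\mathrm{I}\times\dots\times\mathrm{I}$, $\mathrm{I}=\mathrm{I}^1$; the two maps $[1]\to[0]$ give endpoints $0,1:1\to\mathrm{I}$, and $p:A^{\mathrm{I}}\to A^{\partial\mathrm{I}}\cong A\times A$ is induced by the copairing $\partial\mathrm{I}=1+1\to\mathrm{I}$. For $1\le i\le n$, $d\in\{0,1\}$, the face $\alpha_i^d:\mathrm{I}^{n-1}\to\mathrm{I}^n$ inserts $d$ in coordinate $i$; for $e\in\{0,1\}$ the open box $\sqcup^n_e\rightarrowtail\mathrm{I}^n$ is the union of the images of all faces $\alpha_i^d$ with $(i,d)\ne(1,e)$, with inclusion $i^n_e$. A uniform Kan fibration structure on $f:Y\to X$ consists of, for each $n\ge1$, $e\in\{0,1\}$, $k\ge1$ and each commutative square $b:\mathrm{I}^k\times\sqcup^n_e\to Y$, $a:\mathrm{I}^k\times\mathrm{I}^n\to X$ with $fb=a(1\times i^n_e)$, a chosen filler $\phi(a,b):\mathrm{I}^k\times\mathrm{I}^n\to Y$ with $\phi(a,b)(1\times i^n_e)=b$ and $f\phi(a,b)=a$, such that $\phi(a,b)\circ(\alpha\times1)=\phi(a(\alpha\times1),b(\alpha\times1))$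 for all $\alpha:\mathrm{I}^j\to\mathrm{I}^k$ ($j\ge1$). A uniform Kan complex is a cubical set $A$ with a uniform Kan fibration structure on $A\to1$. *)

theory Defs
  imports Main
begin

section \<open>The category B of bipointed finite sets\<close>

text \<open>The object [n] = {bot, x_1, ..., x_n, top}; points are encoded by pt.\<close>
datatype pt = Bot | Top | Var nat

definition pts :: "nat \<Rightarrow> pt set" where
  "pts n = {Bot, Top} \<union> Var ` {1..n}"

definition hom :: "nat \<Rightarrow> nat \<Rightarrow> (pt \<Rightarrow> pt) set" where
  "hom n m = {f. f Bot = Bot \<and> f Top = Top \<and> (\<forall>x\<in>pts n. f x \<in> pts m)
                 \<and> (\<forall>x. x \<notin> pts n \<longrightarrow> f x = Bot)}"

definition idB :: "nat \<Rightarrow> pt \<Rightarrow> pt" where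
  "idB n = (\<lambda>x. if x \<in> pts n then x else Bot)"

definition endpt :: "bool \<Rightarrow> pt" where
  "endpt d = (if d then Top else Bot)"

section \<open>Cartesian cubical sets = functors B -> Set (presheaves on B^op)\<close>

record 'a cset =
  cells :: "nat \<Rightarrow> 'a set"
  act :: "nat \<Rightarrow> nat \<Rightarrow> (pt \<Rightarrow> pt) \<Rightarrow> 'a \<Rightarrow> 'a"

definition is_cset :: "'a cset \<Rightarrow> bool" where
  "is_cset X \<longleftrightarrow>
     (\<forall>n m f x. f \<in> hom n m \<longrightarrow> x \<in> cells X n \<longrightarrow> act X n m f x \<in> cells X m) \<and>
     (\<forall>n x. x \<in> cells X n \<longrightarrow> act X n n (idB n) x = x) \<and>
     (\<forall>n m l f g x. f \<in> hom n m \<longrightarrow> g \<in> hom m l \<longrightarrow> x \<in> cells X n \<longrightarrow>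
        act X m l g (act X n m f x) = act X n l (g \<circ> f) x)"

definition is_cmap :: "'a cset \<Rightarrow> 'b cset \<Rightarrow> (nat \<Rightarrow> 'a \<Rightarrow> 'b) \<Rightarrow> bool" where
  "is_cmap X Y F \<longleftrightarrow>
     (\<forall>n x. x \<in> cells X n \<longrightarrow> F n x \<in> cells Y n) \<and>
     (\<forall>n m f x. f \<in> hom n m \<longrightarrow> x \<in> cells X n \<longrightarrow>
        F m (act X n m f x) = act Y n m f (F n x))"

text \<open>A map from a subpresheaf S of the representable I^N (= y[N], with
  I^N([m]) = hom N m, action by postcomposition) into Y, stored extensionally
  (undefined outside S).\<close>
definition is_sub_map :: "nat \<Rightarrow> (nat \<Rightarrow> (pt \<Rightarrow> pt) set) \<Rightarrow> 'y cset
    \<Rightarrow> (nat \<Rightarrow> (pt \<Rightarrow> pt) \<Rightarrow> 'y) \<Rightarrow> bool" where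
  "is_sub_map N S Y b \<longleftrightarrow>
     (\<forall>m u. u \<in> S m \<longrightarrow> b m u \<in> cells Y m) \<and>
     (\<forall>m l u g. u \<in> S m \<longrightarrow> g \<in> hom m l \<longrightarrow> b l (g \<circ> u) = act Y m l g (b m u))"

definition extensional_on :: "(nat \<Rightarrow> (pt \<Rightarrow> pt) set) \<Rightarrow> (nat \<Rightarrow> (pt \<Rightarrow> pt) \<Rightarrow> 'y) \<Rightarrow> bool" where
  "extensional_on S b \<longleftrightarrow> (\<forall>m u. u \<notin> S m \<longrightarrow> b m u = undefined)"

text \<open>The full cube I^k x I^n = I^(k+n) (first k coordinates: I^k).\<close>
definition fullcube :: "nat \<Rightarrow> nat \<Rightarrow> nat \<Rightarrow> (pt \<Rightarrow> pt) set" where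
  "fullcube k n m = hom (k + n) m"

text \<open>I^k x (open box) inside I^(k+n): union of the faces x_(k+i) = d of
  I^(k+n), 1 <= i <= n, (i,d) \<noteq> (1,e).\<close>
definition boxset :: "nat \<Rightarrow> nat \<Rightarrow> bool \<Rightarrow> nat \<Rightarrow> (pt \<Rightarrow> pt) set" where
  "boxset k n e m = {u \<in> hom (k + n) m.
      \<exists>i\<in>{1..n}. \<exists>d. (i, d) \<noteq> (1, e) \<and> u (Var (k + i)) = endpt d}"

text \<open>For g : [k] -> [j] in B (i.e. alpha : I^j -> I^k), the B-map
  [k+n] -> [j+n] inducing alpha x 1 : I^j x I^n -> I^k x I^n.\<close>
definition liftB :: "nat \<Rightarrow> nat \<Rightarrow> nat \<Rightarrow> (pt \<Rightarrow> pt) \<Rightarrow> pt \<Rightarrow> pt" where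
  "liftB k j n g = (\<lambda>x. case x of Bot \<Rightarrow> Bot | Top \<Rightarrow> Top
      | Var i \<Rightarrow> if 1 \<le> i \<and> i \<le> k then g (Var i)
                 else if k < i \<and> i \<le> k + n then Var (i - k + j) else Bot)"

definition pullback_along :: "(nat \<Rightarrow> (pt \<Rightarrow> pt) set) \<Rightarrow> (pt \<Rightarrow> pt)
    \<Rightarrow> (nat \<Rightarrow> (pt \<Rightarrow> pt) \<Rightarrow> 'y) \<Rightarrow> nat \<Rightarrow> (pt \<Rightarrow> pt) \<Rightarrow> 'y" where
  "pullback_along S h b = (\<lambda>m u. if u \<in> S m then b m (u \<circ> h) else undefined)"

definition kan_square :: "'y cset \<Rightarrow> 'x cset \<Rightarrow> (nat \<Rightarrow> 'y \<Rightarrow> 'x) \<Rightarrow> nat \<Rightarrow> nat \<Rightarrow> bool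
    \<Rightarrow> (nat \<Rightarrow> (pt \<Rightarrow> pt) \<Rightarrow> 'x) \<Rightarrow> (nat \<Rightarrow> (pt \<Rightarrow> pt) \<Rightarrow> 'y) \<Rightarrow> bool" where
  "kan_square Y X F k n e a b \<longleftrightarrow>
     is_sub_map (k + n) (fullcube k n) X a \<and> extensional_on (fullcube k n) a \<and>
     is_sub_map (k + n) (boxset k n e) Y b \<and> extensional_on (boxset k n e) b \<and>
     (\<forall>m u. u \<in> boxset k n e m \<longrightarrow> F m (b m u) = a m u)"

definition is_ukf_structure :: "'y cset \<Rightarrow> 'x cset \<Rightarrow> (nat \<Rightarrow> 'y \<Rightarrow> 'x)
    \<Rightarrow> (nat \<Rightarrow> bool \<Rightarrow> nat \<Rightarrow> (nat \<Rightarrow> (pt \<Rightarrow> pt) \<Rightarrow> 'x) \<Rightarrow> (nat \<Rightarrow> (pt \<Rightarrow> pt) \<Rightarrow> 'y)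
        \<Rightarrow> nat \<Rightarrow> (pt \<Rightarrow> pt) \<Rightarrow> 'y) \<Rightarrow> bool" where
  "is_ukf_structure Y X F phi \<longleftrightarrow>
     (\<forall>n e k a b. 1 \<le> n \<longrightarrow> 1 \<le> k \<longrightarrow> kan_square Y X F k n e a b \<longrightarrow>
        is_sub_map (k + n) (fullcube k n) Y (phi n e k a b) \<and>
        (\<forall>m u. u \<in> boxset k n e m \<longrightarrow> phi n e k a b m u = b m u) \<and>
        (\<forall>m u. u \<in> fullcube k n m \<longrightarrow> F m (phi n e k a b m u) = a m u) \<and>
        (\<forall>j g. 1 \<le> j \<longrightarrow> g \<in> hom k j \<longrightarrow>
           (\<forall>m u. u \<in> fullcube j n m \<longrightarrow>
              phi n e k a b m (u \<circ> liftB k j n g) =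
              phi n e j (pullback_along (fullcube j n) (liftB k j n g) a)
                        (pullback_along (boxset j n e) (liftB k j n g) b) m u)))"

definition ukf :: "'y cset \<Rightarrow> 'x cset \<Rightarrow> (nat \<Rightarrow> 'y \<Rightarrow> 'x) \<Rightarrow> bool" where
  "ukf Y X F \<longleftrightarrow> (\<exists>phi. is_ukf_structure Y X F phi)"

definition terminal_cset :: "unit cset" where
  "terminal_cset = \<lparr>cells = (\<lambda>m. {()}), act = (\<lambda>n m f x. ())\<rparr>"

definition uniform_kan_complex :: "'a cset \<Rightarrow> bool" where
  "uniform_kan_complex A \<longleftrightarrow> ukf A terminal_cset (\<lambda>m x. ())"

text \<open>(A^I)([m]) = Hom(I^m x I, A) = A([m+1]), the path coordinate being last.\<close>
definition path_obj :: "'a cset \<Rightarrow> 'a cset" where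
  "path_obj A = \<lparr>cells = (\<lambda>m. cells A (Suc m)),
                 act = (\<lambda>n m f x. act A (Suc n) (Suc m) (liftB n m 1 f) x)\<rparr>"

definition prod_cset :: "'a cset \<Rightarrow> 'b cset \<Rightarrow> ('a \<times> 'b) cset" where
  "prod_cset A B = \<lparr>cells = (\<lambda>m. cells A m \<times> cells B m),
                    act = (\<lambda>n m f x. (act A n m f (fst x), act B n m f (snd x)))\<rparr>"

text \<open>The B-map [m+1] -> [m] sending x_(m+1) to the endpoint d (restriction
  of a path to the end d).\<close>
definition endB :: "nat \<Rightarrow> bool \<Rightarrow> pt \<Rightarrow> pt" where
  "endB m d = (\<lambda>x. if x = Var (Suc m) then endpt d else if x \<in> pts m then x else Bot)"

definition path_proj :: "'a cset \<Rightarrow> nat \<Rightarrow> 'a \<Rightarrow> 'a \<times> 'a" where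
  "path_proj A = (\<lambda>m x. (act A (Suc m) m (endB m False) x, act A (Suc m) m (endB m True) x))"

end

theory Submission imports Defs begin

text \<open>A square for \<open>p\<close> consists of \<open>b : I\<^sup>k \<times> \<sqcup>\<^sup>n\<^sub>e \<rightarrow> A\<^sup>I\<close> and
  \<open>a : I\<^sup>k \<times> I\<^sup>n \<rightarrow> A \<times> A\<close>. Transposing the path coordinate, \<open>b\<close> becomes a map on
  \<open>I\<^sup>k \<times> \<sqcup>\<^sup>n\<^sub>e \<times> I\<close> and \<open>a\<close> a map on \<open>I\<^sup>k \<times> I\<^sup>n \<times> \<partial>I\<close>; they agree on the
  overlap and glue to an open box \<open>I\<^sup>k \<times> \<sqcup>\<^sup>n\<^sup>+\<^sup>1\<^sub>e \<rightarrow> A\<close> whose missing face is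
  still the first one (here \<open>n \<ge> 1\<close> is needed). Filling this box in \<open>A\<close> and
  transposing back gives the filler for \<open>p\<close>. Uniformity is inherited from that
  of \<open>A\<close>, since transposition commutes with reindexing along \<open>\<alpha> \<times> 1\<close>.\<close>

type_synonym 'y cube_map = "nat \<Rightarrow> (pt \<Rightarrow> pt) \<Rightarrow> 'y"

lemma pts_Var [simp]: "Var i \<in> pts n \<longleftrightarrow> 1 \<le> i \<and> i \<le> n"
  and pts_Bot [simp]: "Bot \<in> pts n"
  and pts_Top [simp]: "Top \<in> pts n"
  by (auto simp: pts_def)

lemma pts_mono: "a \<le> b \<Longrightarrow> x \<in> pts a \<Longrightarrow> x \<in> pts b"
  by (cases x) auto

lemma homD:
  assumes "f \<in> hom n m"
  shows "f Bot = Bot" "f Top = Top" "\<And>x. x \<in> pts n \<Longrightarrow> f x \<in> pts m"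
    "\<And>x. x \<notin> pts n \<Longrightarrow> f x = Bot"
  using assms by (auto simp: hom_def)

lemma homI:
  "f Bot = Bot \<Longrightarrow> f Top = Top \<Longrightarrow> (\<And>x. x \<in> pts n \<Longrightarrow> f x \<in> pts m) \<Longrightarrow>
   (\<And>x. x \<notin> pts n \<Longrightarrow> f x = Bot) \<Longrightarrow> f \<in> hom n m"
  by (auto simp: hom_def)

lemma comp_hom: "f \<in> hom n m \<Longrightarrow> g \<in> hom m l \<Longrightarrow> g \<circ> f \<in> hom n l"
  by (auto simp: hom_def)

lemma hom_range: "u \<in> hom N m \<Longrightarrow> u x \<in> pts m"
  by (cases "x \<in> pts N") (auto simp: homD)

lemma hom_endpt: "g \<in> hom m l \<Longrightarrow> g (endpt d) = endpt d"
  by (simp add: endpt_def homD)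

lemma idB_comp: "u \<in> hom N m \<Longrightarrow> idB m \<circ> u = u"
  by (rule ext) (simp add: idB_def hom_range)

lemma idB_in_hom_Suc: "idB m \<in> hom m (Suc m)"
  by (rule homI) (auto simp: idB_def pts_def)

lemma is_csetD:
  assumes "is_cset X"
  shows "\<And>n m f x. f \<in> hom n m \<Longrightarrow> x \<in> cells X n \<Longrightarrow> act X n m f x \<in> cells X m"
    "\<And>n x. x \<in> cells X n \<Longrightarrow> act X n n (idB n) x = x"
    "\<And>n m l f g x. f \<in> hom n m \<Longrightarrow> g \<in> hom m l \<Longrightarrow> x \<in> cells X n \<Longrightarrow>
        act X m l g (act X n m f x) = act X n l (g \<circ> f) x"
  using assms unfolding is_cset_def by blast+

lemma is_sub_mapD:
  assumes "is_sub_map N S Y b"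
  shows "\<And>m u. u \<in> S m \<Longrightarrow> b m u \<in> cells Y m"
    "\<And>m l u g. u \<in> S m \<Longrightarrow> g \<in> hom m l \<Longrightarrow> b l (g \<circ> u) = act Y m l g (b m u)"
  using assms unfolding is_sub_map_def by blast+

lemma is_ukf_structureD:
  assumes "is_ukf_structure Y X F phi" "1 \<le> n" "1 \<le> k" "kan_square Y X F k n e a b"
  shows "is_sub_map (k + n) (fullcube k n) Y (phi n e k a b)"
    "\<And>m u. u \<in> boxset k n e m \<Longrightarrow> phi n e k a b m u = b m u"
    "\<And>j g m u. 1 \<le> j \<Longrightarrow> g \<in> hom k j \<Longrightarrow> u \<in> fullcube j n m \<Longrightarrow>
       phi n e k a b m (u \<circ> liftB k j n g) =
       phi n e j (pullback_along (fullcube j n) (liftB k j n g) a)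
                 (pullback_along (boxset j n e) (liftB k j n g) b) m u"
  using assms unfolding is_ukf_structure_def by blast+

lemma liftB_pts: "g \<in> hom k j \<Longrightarrow> x \<in> pts k \<Longrightarrow> liftB k j n g x = g x"
  by (cases x) (auto simp: liftB_def homD)

lemma liftB_hom:
  assumes g: "g \<in> hom k j"
  shows "liftB k j n g \<in> hom (k + n) (j + n)"
proof (rule homI)
  fix x assume x: "x \<in> pts (k + n)"
  show "liftB k j n g x \<in> pts (j + n)"
  proof (cases x)
    case (Var i)
    show ?thesis
    proof (cases "1 \<le> i \<and> i \<le> k")
      case True
      then have "g x \<in> pts (j + n)"
        using homD(3)[OF g] Var pts_mono[of j "j + n"] by simp
      then show ?thesis using True Var by (simp add: liftB_def)
    next
      case False
      then show ?thesis using Var x by (auto simp: liftB_def)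
    qed
  qed (auto simp: liftB_def)
next
  fix x assume "x \<notin> pts (k + n)"
  then show "liftB k j n g x = Bot" by (cases x) (auto simp: liftB_def)
qed (auto simp: liftB_def)

lemma liftB_one_hom: "u \<in> hom N m \<Longrightarrow> liftB N m 1 u \<in> hom (Suc N) (Suc m)"
  using liftB_hom[of u N m 1] by simp

lemma liftB_comp:
  assumes u: "u \<in> hom K M" and g: "g \<in> hom M L"
  shows "liftB K L n (g \<circ> u) = liftB M L n g \<circ> liftB K M n u"
proof
  fix x
  show "liftB K L n (g \<circ> u) x = (liftB M L n g \<circ> liftB K M n u) x"
  proof (cases x)
    case (Var i)
    show ?thesis
    proof (cases "1 \<le> i \<and> i \<le> K")
      case True
      then have "u x \<in> pts M" using homD(3)[OF u] Var by simp
      then show ?thesis using True Var liftB_pts[OF g] by (simp add: liftB_def)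
    next
      case False
      then show ?thesis using Var by (auto simp: liftB_def)
    qed
  qed (auto simp: liftB_def)
qed

lemma liftB_one_comp_liftB:
  assumes g: "g \<in> hom k j" and u: "u \<in> hom (j + n) m"
  shows "liftB (k + n) m 1 (u \<circ> liftB k j n g) = liftB (j + n) m 1 u \<circ> liftB k j (Suc n) g"
proof
  fix x
  show "liftB (k + n) m 1 (u \<circ> liftB k j n g) x = (liftB (j + n) m 1 u \<circ> liftB k j (Suc n) g) x"
  proof (cases x)
    case (Var i)
    consider "1 \<le> i \<and> i \<le> k" | "k < i \<and> i \<le> Suc (k + n)" | "i < 1 \<or> i > Suc (k + n)"
      by linarith
    then show ?thesis
    proof cases
      case 1
      then have "g x \<in> pts (j + n)"
        using homD(3)[OF g] Var pts_mono[of j "j + n"] by simp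
      then show ?thesis using 1 Var liftB_pts[OF u, of "g x"] by (simp add: liftB_def)
    qed (use Var in \<open>auto simp: liftB_def homD[OF u]\<close>)
  qed (auto simp: liftB_def)
qed

text \<open>Acting by \<open>evB m t\<close> evaluates a path (an \<open>(m+1)\<close>-cell, the path coordinate
  being last) at the point \<open>t\<close>.\<close>

definition evB :: "nat \<Rightarrow> pt \<Rightarrow> pt \<Rightarrow> pt" where
  "evB m t = (\<lambda>x. if x = Var (Suc m) then t else if x \<in> pts m then x else Bot)"

definition resB :: "nat \<Rightarrow> (pt \<Rightarrow> pt) \<Rightarrow> pt \<Rightarrow> pt" where
  "resB N v = (\<lambda>x. if x \<in> pts N then v x else Bot)"

lemma endB_eq_evB: "endB m d = evB m (endpt d)"
  by (simp add: endB_def evB_def)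

lemma evB_hom: "t \<in> pts m \<Longrightarrow> evB m t \<in> hom (Suc m) m"
  by (rule homI) (auto simp: evB_def pts_def)

lemma resB_hom: "v \<in> hom (Suc N) m \<Longrightarrow> resB N v \<in> hom N m"
  by (rule homI) (auto simp: resB_def homD hom_range)

lemma resB_comp: "g \<in> hom m l \<Longrightarrow> resB N (g \<circ> v) = g \<circ> resB N v"
  by (rule ext) (simp add: resB_def homD)

lemma evB_comp_liftB:
  assumes g: "g \<in> hom m l" and t: "t \<in> pts m"
  shows "evB l (g t) \<circ> liftB m l 1 g = g \<circ> evB m t"
proof
  fix x
  show "(evB l (g t) \<circ> liftB m l 1 g) x = (g \<circ> evB m t) x"
  proof (cases "x \<in> pts m")
    case True
    then have "g x \<in> pts l" using homD(3)[OF g] by simp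
    then show ?thesis using True liftB_pts[OF g True] by (auto simp: evB_def)
  next
    case False
    show ?thesis
    proof (cases "x = Var (Suc m)")
      case True
      then show ?thesis by (simp add: evB_def liftB_def)
    next
      case not_last: False
      then have "liftB m l 1 g x = Bot" using False by (cases x) (auto simp: liftB_def)
      then show ?thesis using False not_last by (simp add: evB_def homD[OF g])
    qed
  qed
qed

lemma evB_comp_liftB_idB: "evB (Suc m) (Var (Suc m)) \<circ> liftB m (Suc m) 1 (idB m) = idB (Suc m)"
proof
  fix x show "(evB (Suc m) (Var (Suc m)) \<circ> liftB m (Suc m) 1 (idB m)) x = idB (Suc m) x"
    by (cases x) (auto simp: evB_def liftB_def idB_def)
qed

lemma resB_liftB: "u \<in> hom N m \<Longrightarrow> resB N (liftB N m 1 u) = u"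
  by (rule ext) (auto simp: resB_def liftB_pts homD)

lemma resB_evB_comp_liftB:
  assumes u: "u \<in> hom N m" and t: "t \<in> pts m"
  shows "resB N (evB m t \<circ> liftB N m 1 u) = u"
proof
  fix x
  show "resB N (evB m t \<circ> liftB N m 1 u) x = u x"
  proof (cases "x \<in> pts N")
    case True
    then have "u x \<in> pts m" using homD(3)[OF u] by simp
    then show ?thesis using True by (auto simp: resB_def liftB_pts[OF u] evB_def)
  qed (auto simp: resB_def homD[OF u])
qed

lemma resB_comp_liftB:
  assumes g: "g \<in> hom k j" and "w Bot = Bot"
  shows "resB (k + n) (w \<circ> liftB k j (Suc n) g) = resB (j + n) w \<circ> liftB k j n g"
proof
  fix x
  have h: "liftB k j n g \<in> hom (k + n) (j + n)" using liftB_hom[OF g] .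
  show "resB (k + n) (w \<circ> liftB k j (Suc n) g) x = (resB (j + n) w \<circ> liftB k j n g) x"
  proof (cases "x \<in> pts (k + n)")
    case True
    then have "liftB k j (Suc n) g x = liftB k j n g x"
      by (cases x) (auto simp: liftB_def)
    then show ?thesis using True homD(3)[OF h True] by (simp add: resB_def)
  next
    case False
    then show ?thesis by (simp add: resB_def homD[OF h] assms(2))
  qed
qed

lemma boxset_comp:
  assumes u: "u \<in> boxset k n e m" and g: "g \<in> hom m l"
  shows "g \<circ> u \<in> boxset k n e l"
proof -
  obtain i d where i: "i \<in> {1..n}" "(i, d) \<noteq> (1, e)" "u (Var (k + i)) = endpt d"
    and uh: "u \<in> hom (k + n) m"
    using u unfolding boxset_def by blast
  then have "(g \<circ> u) (Var (k + i)) = endpt d" using hom_endpt[OF g] by simp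
  then show ?thesis using i(1,2) comp_hom[OF uh g] unfolding boxset_def by blast
qed

lemma boxset_Suc_target:
  assumes u: "u \<in> boxset k n e m"
  shows "u \<in> boxset k n e (Suc m)"
proof -
  have "idB m \<circ> u = u" using u idB_comp unfolding boxset_def by blast
  then show ?thesis using boxset_comp[OF u idB_in_hom_Suc] by simp
qed

lemma boxset_comp_liftB:
  assumes w: "w \<in> boxset j n e m" and g: "g \<in> hom k j"
  shows "w \<circ> liftB k j n g \<in> boxset k n e m"
proof -
  obtain i d where i: "i \<in> {1..n}" "(i, d) \<noteq> (1, e)" "w (Var (j + i)) = endpt d"
    and wh: "w \<in> hom (j + n) m"
    using w unfolding boxset_def by blast
  have "liftB k j n g (Var (k + i)) = Var (j + i)" using i(1) by (auto simp: liftB_def)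
  then have "(w \<circ> liftB k j n g) (Var (k + i)) = endpt d" using i(3) by simp
  then show ?thesis using i(1,2) comp_hom[OF liftB_hom[OF g] wh] unfolding boxset_def by blast
qed

text \<open>For \<open>n \<ge> 1\<close>, \<open>\<sqcup>\<^sup>n\<^sup>+\<^sup>1\<^sub>e = \<sqcup>\<^sup>n\<^sub>e \<times> I \<union> I\<^sup>n \<times> \<partial>I\<close>, the new coordinate being last.\<close>

lemma boxset_SucI_end:
  assumes "v \<in> hom (Suc (k + n)) m" "v (Var (Suc (k + n))) = endpt d" "1 \<le> n"
  shows "v \<in> boxset k (Suc n) e m"
proof -
  have "Suc n \<in> {1..Suc n}" "(Suc n, d) \<noteq> (1, e)" "v (Var (k + Suc n)) = endpt d"
    "v \<in> hom (k + Suc n) m"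
    using assms by auto
  then show ?thesis unfolding boxset_def by blast
qed

lemma boxset_SucI_resB:
  assumes "v \<in> hom (Suc (k + n)) m" "resB (k + n) v \<in> boxset k n e m"
  shows "v \<in> boxset k (Suc n) e m"
  using assms unfolding boxset_def resB_def by (force split: if_splits)

lemma boxset_Suc_resB:
  assumes v: "v \<in> boxset k (Suc n) e m"
    and "v (Var (Suc (k + n))) \<noteq> Bot" "v (Var (Suc (k + n))) \<noteq> Top"
  shows "resB (k + n) v \<in> boxset k n e m"
proof -
  have vh: "v \<in> hom (Suc (k + n)) m" using v by (simp add: boxset_def)
  obtain i d where i: "i \<in> {1..Suc n}" "(i, d) \<noteq> (1, e)" "v (Var (k + i)) = endpt d"
    using v unfolding boxset_def by blast
  have "i \<noteq> Suc n" using i(3) assms(2,3) by (cases d) (auto simp: endpt_def)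
  with i have "i \<in> {1..n}" "resB (k + n) v (Var (k + i)) = endpt d"
    by (auto simp: resB_def)
  then show ?thesis using resB_hom[OF vh] i(2) by (auto simp: boxset_def)
qed

lemma liftB_one_in_boxset_Suc:
  assumes u: "u \<in> boxset k n e m"
  shows "liftB (k + n) m 1 u \<in> boxset k (Suc n) e (Suc m)"
proof -
  have uh: "u \<in> hom (k + n) m" using u by (simp add: boxset_def)
  show ?thesis
    using boxset_SucI_resB[OF liftB_one_hom[OF uh]] boxset_Suc_target[OF u] resB_liftB[OF uh]
    by simp
qed

lemma evB_comp_liftB_in_boxset_Suc:
  assumes u: "u \<in> hom (k + n) m" and n: "1 \<le> n"
  shows "evB m (endpt d) \<circ> liftB (k + n) m 1 u \<in> boxset k (Suc n) e m"
proof (rule boxset_SucI_end[OF _ _ n])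
  show "evB m (endpt d) \<circ> liftB (k + n) m 1 u \<in> hom (Suc (k + n)) m"
    using comp_hom[OF liftB_one_hom[OF u] evB_hom] by (simp add: endpt_def)
  show "(evB m (endpt d) \<circ> liftB (k + n) m 1 u) (Var (Suc (k + n))) = endpt d"
    by (simp add: liftB_def evB_def)
qed

text \<open>The open box \<open>I\<^sup>k \<times> \<sqcup>\<^sup>n\<^sup>+\<^sup>1\<^sub>e \<rightarrow> A\<close> transposed from a square for \<open>p\<close>. A cell \<open>v\<close> of
  the box whose last coordinate \<open>t\<close> is not an endpoint factors as
  \<open>evB m t \<circ> liftB (k+n) m 1 (resB (k+n) v)\<close> with \<open>resB (k+n) v\<close> in the smaller box.\<close>

definition path_box :: "'a cset \<Rightarrow> nat \<Rightarrow> nat \<Rightarrow> bool \<Rightarrow> ('a \<times> 'a) cube_map \<Rightarrow> 'a cube_map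
    \<Rightarrow> 'a cube_map" where
  "path_box A k n e a b = (\<lambda>m v. if v \<in> boxset k (Suc n) e m then
     (if v (Var (Suc (k + n))) = Bot then fst (a m (resB (k + n) v))
      else if v (Var (Suc (k + n))) = Top then snd (a m (resB (k + n) v))
      else act A (Suc m) m (evB m (v (Var (Suc (k + n))))) (b m (resB (k + n) v)))
     else undefined)"

lemma pullback_path_box:
  assumes g: "g \<in> hom k j"
  shows "pullback_along (boxset j (Suc n) e) (liftB k j (Suc n) g) (path_box A k n e a b)
   = path_box A j n e (pullback_along (fullcube j n) (liftB k j n g) a)
                      (pullback_along (boxset j n e) (liftB k j n g) b)"
proof (intro ext)
  fix m w
  show "pullback_along (boxset j (Suc n) e) (liftB k j (Suc n) g) (path_box A k n e a b) m w
   = path_box A j n e (pullback_along (fullcube j n) (liftB k j n g) a)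
                      (pullback_along (boxset j n e) (liftB k j n g) b) m w"
  proof (cases "w \<in> boxset j (Suc n) e m")
    case True
    have wh: "w \<in> hom (Suc (j + n)) m" using True by (simp add: boxset_def)
    have "w \<circ> liftB k j (Suc n) g \<in> boxset k (Suc n) e m"
      using boxset_comp_liftB[OF True g] .
    moreover have "resB (j + n) w \<in> fullcube j n m"
      using resB_hom[OF wh] by (simp add: fullcube_def)
    moreover note boxset_Suc_resB[OF True]
    moreover have "liftB k j (Suc n) g (Var (Suc (k + n))) = Var (Suc (j + n))"
      by (simp add: liftB_def)
    ultimately show ?thesis using True
      by (auto simp: pullback_along_def path_box_def
          resB_comp_liftB[where w = w and n = n, OF g homD(1)[OF wh]])
  qed (simp add: pullback_along_def path_box_def)
qed

context
  fixes A :: "'a cset" and k n e a b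
  assumes A: "is_cset A"
    and sq: "kan_square (path_obj A) (prod_cset A A) (path_proj A) k n e a b"
begin

lemma square_base:
  "u \<in> hom (k + n) m \<Longrightarrow> a m u \<in> cells A m \<times> cells A m"
  "u \<in> hom (k + n) m \<Longrightarrow> g \<in> hom m l \<Longrightarrow>
     a l (g \<circ> u) = (act A m l g (fst (a m u)), act A m l g (snd (a m u)))"
  using sq by (auto simp: kan_square_def is_sub_map_def fullcube_def prod_cset_def)

lemma square_box:
  "u \<in> boxset k n e m \<Longrightarrow> b m u \<in> cells A (Suc m)"
  "u \<in> boxset k n e m \<Longrightarrow> g \<in> hom m l \<Longrightarrow>
     b l (g \<circ> u) = act A (Suc m) (Suc l) (liftB m l 1 g) (b m u)"
  "u \<in> boxset k n e m \<Longrightarrow> path_proj A m (b m u) = a m u"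
  using sq by (auto simp: kan_square_def is_sub_map_def path_obj_def)

lemma square_box_ends:
  assumes "u \<in> boxset k n e m"
  shows "act A (Suc m) m (evB m Bot) (b m u) = fst (a m u)"
    "act A (Suc m) m (evB m Top) (b m u) = snd (a m u)"
  using square_box(3)[OF assms, symmetric] by (auto simp: path_proj_def endB_eq_evB endpt_def)

lemma evB_square_box_natural:
  assumes u: "u \<in> boxset k n e m" and g: "g \<in> hom m l" and t: "t \<in> pts m"
  shows "act A (Suc l) l (evB l (g t)) (b l (g \<circ> u))
       = act A m l g (act A (Suc m) m (evB m t) (b m u))"
proof -
  have gt: "g t \<in> pts l" using homD(3)[OF g t] .
  have lh: "liftB m l 1 g \<in> hom (Suc m) (Suc l)" using liftB_one_hom[OF g] .
  have "act A (Suc l) l (evB l (g t)) (b l (g \<circ> u))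
      = act A (Suc l) l (evB l (g t)) (act A (Suc m) (Suc l) (liftB m l 1 g) (b m u))"
    using square_box(2)[OF u g] by simp
  also have "\<dots> = act A (Suc m) l (evB l (g t) \<circ> liftB m l 1 g) (b m u)"
    using is_csetD(3)[OF A lh evB_hom[OF gt] square_box(1)[OF u]] .
  also have "\<dots> = act A (Suc m) l (g \<circ> evB m t) (b m u)"
    using evB_comp_liftB[OF g t] by simp
  also have "\<dots> = act A m l g (act A (Suc m) m (evB m t) (b m u))"
    using is_csetD(3)[OF A evB_hom[OF t] g square_box(1)[OF u]] by simp
  finally show ?thesis .
qed

lemma path_box_cells:
  assumes v: "v \<in> boxset k (Suc n) e m"
  shows "path_box A k n e a b m v \<in> cells A m"
proof -
  have vh: "v \<in> hom (Suc (k + n)) m" using v by (simp add: boxset_def)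
  show ?thesis
  proof (cases "v (Var (Suc (k + n))) = Bot \<or> v (Var (Suc (k + n))) = Top")
    case True
    then show ?thesis using square_base(1)[OF resB_hom[OF vh]] v by (auto simp: path_box_def)
  next
    case False
    then have "resB (k + n) v \<in> boxset k n e m" using boxset_Suc_resB[OF v] by auto
    then show ?thesis
      using False v is_csetD(1)[OF A evB_hom[OF hom_range[OF vh]] square_box(1)]
      by (simp add: path_box_def)
  qed
qed

lemma path_box_natural:
  assumes v: "v \<in> boxset k (Suc n) e m" and g: "g \<in> hom m l"
  shows "path_box A k n e a b l (g \<circ> v) = act A m l g (path_box A k n e a b m v)"
proof -
  define t where "t = v (Var (Suc (k + n)))"
  have vh: "v \<in> hom (Suc (k + n)) m" using v by (simp add: boxset_def)
  have gv: "g \<circ> v \<in> boxset k (Suc n) e l" using boxset_comp[OF v g] .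
  have res: "resB (k + n) (g \<circ> v) = g \<circ> resB (k + n) v" using resB_comp[OF g] .
  show ?thesis
  proof (cases "t = Bot \<or> t = Top")
    case True
    then have "g t = t" using homD[OF g] by auto
    then show ?thesis
      using True v gv square_base(2)[OF resB_hom[OF vh] g]
      by (auto simp: path_box_def res t_def[symmetric])
  next
    case False
    then have rb: "resB (k + n) v \<in> boxset k n e m"
      using boxset_Suc_resB[OF v] by (auto simp: t_def)
    have "act A m l g (path_box A k n e a b m v)
        = act A m l g (act A (Suc m) m (evB m t) (b m (resB (k + n) v)))"
      using False v by (simp add: path_box_def t_def[symmetric])
    also have "\<dots> = act A (Suc l) l (evB l (g t)) (b l (g \<circ> resB (k + n) v))"
      using evB_square_box_natural[OF rb g] vh by (simp add: t_def hom_range)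
    also have "\<dots> = path_box A k n e a b l (g \<circ> v)"
      using gv square_box_ends[OF boxset_comp[OF rb g]] by (auto simp: path_box_def res t_def)
    finally show ?thesis by simp
  qed
qed

lemma path_box_kan_square:
  "kan_square A terminal_cset (\<lambda>m x. ()) k (Suc n) e (\<lambda>m u. ()) (path_box A k n e a b)"
  unfolding kan_square_def is_sub_map_def extensional_on_def
  using path_box_cells path_box_natural by (simp add: terminal_cset_def path_box_def)

lemma path_box_liftB:
  assumes u: "u \<in> boxset k n e m"
  shows "path_box A k n e a b (Suc m) (liftB (k + n) m 1 u) = b m u"
proof -
  define v where "v = liftB (k + n) m 1 u"
  have uh: "u \<in> hom (k + n) m" using u by (simp add: boxset_def)
  have res: "resB (k + n) v = u" using resB_liftB[OF uh] by (simp add: v_def)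
  have last: "v (Var (Suc (k + n))) = Var (Suc m)" by (simp add: v_def liftB_def)
  have eh: "evB (Suc m) (Var (Suc m)) \<in> hom (Suc (Suc m)) (Suc m)" by (rule evB_hom) simp
  have b_Suc: "b (Suc m) u = act A (Suc m) (Suc (Suc m)) (liftB m (Suc m) 1 (idB m)) (b m u)"
    using square_box(2)[OF u idB_in_hom_Suc] idB_comp[OF uh] by simp
  have "path_box A k n e a b (Suc m) v
      = act A (Suc (Suc m)) (Suc m) (evB (Suc m) (Var (Suc m))) (b (Suc m) u)"
    using liftB_one_in_boxset_Suc[OF u] res last by (simp add: path_box_def v_def)
  also have "\<dots> = act A (Suc m) (Suc m) (idB (Suc m)) (b m u)"
    unfolding b_Suc is_csetD(3)[OF A liftB_one_hom[OF idB_in_hom_Suc] eh square_box(1)[OF u]]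
      evB_comp_liftB_idB ..
  also have "\<dots> = b m u" using is_csetD(2)[OF A square_box(1)[OF u]] .
  finally show ?thesis by (simp add: v_def)
qed

lemma path_box_end:
  assumes u: "u \<in> fullcube k n m" and n: "1 \<le> n"
  shows "path_box A k n e a b m (evB m (endpt d) \<circ> liftB (k + n) m 1 u)
       = (if d then snd (a m u) else fst (a m u))"
proof -
  have uh: "u \<in> hom (k + n) m" using u by (simp add: fullcube_def)
  have "resB (k + n) (evB m (endpt d) \<circ> liftB (k + n) m 1 u) = u"
    using resB_evB_comp_liftB[OF uh] by (simp add: endpt_def)
  moreover have "(evB m (endpt d) \<circ> liftB (k + n) m 1 u) (Var (Suc (k + n))) = endpt d"
    by (simp add: liftB_def evB_def)
  ultimately show ?thesis
    using evB_comp_liftB_in_boxset_Suc[OF uh n] by (simp only: path_box_def) (simp add: endpt_def)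
qed

end

definition path_filler :: "'a cset
    \<Rightarrow> (nat \<Rightarrow> bool \<Rightarrow> nat \<Rightarrow> unit cube_map \<Rightarrow> 'a cube_map \<Rightarrow> 'a cube_map)
    \<Rightarrow> nat \<Rightarrow> bool \<Rightarrow> nat \<Rightarrow> ('a \<times> 'a) cube_map \<Rightarrow> 'a cube_map \<Rightarrow> 'a cube_map" where
  "path_filler A psi n e k a b m u =
     psi (Suc n) e k (\<lambda>m u. ()) (path_box A k n e a b) (Suc m) (liftB (k + n) m 1 u)"

context
  fixes A :: "'a cset" and psi
  assumes A: "is_cset A"
    and psi: "is_ukf_structure A terminal_cset (\<lambda>m x. ()) psi"
begin

context
  fixes k n e a b
  assumes k: "1 \<le> k" and n: "1 \<le> n"
    and sq: "kan_square (path_obj A) (prod_cset A A) (path_proj A) k n e a b"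
begin

lemmas box_filler = is_ukf_structureD[OF psi le_SucI[OF n] k path_box_kan_square[OF A sq]]

lemma path_filler_sub_map:
  "is_sub_map (k + n) (fullcube k n) (path_obj A) (path_filler A psi n e k a b)"
  unfolding is_sub_map_def
proof (intro conjI allI impI)
  fix m u assume "u \<in> fullcube k n m"
  then show "path_filler A psi n e k a b m u \<in> cells (path_obj A) m"
    using is_sub_mapD(1)[OF box_filler(1)] liftB_one_hom[of u "k + n" m]
    by (simp add: path_filler_def path_obj_def fullcube_def)
next
  fix m l u g assume u: "u \<in> fullcube k n m" and g: "g \<in> hom m l"
  then have uh: "u \<in> hom (k + n) m" by (simp add: fullcube_def)
  show "path_filler A psi n e k a b l (g \<circ> u) = act (path_obj A) m l g (path_filler A psi n e k a b m u)"
    using is_sub_mapD(2)[OF box_filler(1), of "liftB (k + n) m 1 u" "Suc m" "liftB m l 1 g"]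
      liftB_one_hom[OF uh] liftB_one_hom[OF g] liftB_comp[OF uh g]
    by (simp add: path_filler_def path_obj_def fullcube_def)
qed

lemma path_filler_on_box: "u \<in> boxset k n e m \<Longrightarrow> path_filler A psi n e k a b m u = b m u"
  using box_filler(2)[OF liftB_one_in_boxset_Suc] path_box_liftB[OF A sq]
  by (simp add: path_filler_def)

lemma path_proj_path_filler:
  assumes u: "u \<in> fullcube k n m"
  shows "path_proj A m (path_filler A psi n e k a b m u) = a m u"
proof -
  let ?Psi = "psi (Suc n) e k (\<lambda>m u. ()) (path_box A k n e a b)"
  have uh: "u \<in> hom (k + n) m" using u by (simp add: fullcube_def)
  have lifted: "liftB (k + n) m 1 u \<in> fullcube k (Suc n) (Suc m)"
    using liftB_one_hom[OF uh] by (simp add: fullcube_def)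
  have "act A (Suc m) m (endB m d) (path_filler A psi n e k a b m u)
      = (if d then snd (a m u) else fst (a m u))" for d
  proof -
    have "act A (Suc m) m (endB m d) (path_filler A psi n e k a b m u)
        = ?Psi m (evB m (endpt d) \<circ> liftB (k + n) m 1 u)"
      using is_sub_mapD(2)[OF box_filler(1) lifted evB_hom[of "endpt d" m]]
      by (simp add: path_filler_def endB_eq_evB endpt_def)
    also have "\<dots> = path_box A k n e a b m (evB m (endpt d) \<circ> liftB (k + n) m 1 u)"
      using box_filler(2)[OF evB_comp_liftB_in_boxset_Suc[OF uh n]] .
    also have "\<dots> = (if d then snd (a m u) else fst (a m u))"
      using path_box_end[OF A sq u n] .
    finally show ?thesis .
  qed
  then show ?thesis by (simp add: path_proj_def)
qed

lemma path_filler_uniform: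
  assumes j: "1 \<le> j" and g: "g \<in> hom k j" and u: "u \<in> fullcube j n m"
  shows "path_filler A psi n e k a b m (u \<circ> liftB k j n g) =
         path_filler A psi n e j (pullback_along (fullcube j n) (liftB k j n g) a)
                                 (pullback_along (boxset j n e) (liftB k j n g) b) m u"
proof -
  have uh: "u \<in> hom (j + n) m" using u by (simp add: fullcube_def)
  have "liftB (j + n) m 1 u \<in> fullcube j (Suc n) (Suc m)"
    using liftB_one_hom[OF uh] by (simp add: fullcube_def)
  moreover have "pullback_along (fullcube j (Suc n)) (liftB k j (Suc n) g) (\<lambda>m u. ()) = (\<lambda>m u. ())"
    by (intro ext) simp
  ultimately show ?thesis
    using box_filler(3)[OF j g] liftB_one_comp_liftB[OF g uh]
    by (simp add: path_filler_def pullback_path_box[OF g])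
qed

end

lemma is_ukf_structure_path_filler:
  "is_ukf_structure (path_obj A) (prod_cset A A) (path_proj A) (path_filler A psi)"
  unfolding is_ukf_structure_def
  by (intro allI impI conjI)
    (simp_all add: path_filler_sub_map path_filler_on_box path_proj_path_filler path_filler_uniform)

end

theorem lemma3p5:
  fixes A :: "'a cset"
  assumes "is_cset A"
    and "uniform_kan_complex A"
  shows "ukf (path_obj A) (prod_cset A A) (path_proj A)"
proof -
  obtain psi where "is_ukf_structure A terminal_cset (\<lambda>m x. ()) psi"
    using assms(2) unfolding uniform_kan_complex_def ukf_def by blast
  then show ?thesis
    using is_ukf_structure_path_filler[OF assms(1)] unfolding ukf_def by blast
qed

end
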